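(* There is an absolute constant $C$ such that for every horizon $T\ge 2$ there exists a randomized forecasting algorithm (making predictions in a finite subset of $(0,1)$) which, against every adversary, guarantees $\mathbb{E}[\mathsf{SReg}^{\ell}]\le C\,T^{1/3}(\log T)^{5/3}$ for the log loss $\ell$, where the expectation is over the algorithm's internal randomness. Equivalently, $\mathbb{E}[\mathsf{KLCal}]\le C\,T^{1/3}(\log T)^{5/3}$.
   Context: Forecasting protocol: for $t=1,\dots,T$, the forecaster (randomly) predicts $p_t\in[0,1]$ and simultaneously the adversary chooses $y_t\in\{0,1\}$, which is then revealed; the adversary is oblivious, i.e. it fixes $y_1,\dots,y_T$ in advance with knowledge of the forecaster's algorithm. Log loss: $\ell(p,y)=-y\log p-(1-y)\log(1-p)$. Swap regret: $\mathsf{SReg}^\ell:=\sup_{\sigma:[0,1]\to[0,1]}\sum_{t=1}^T(\ell(p_t,y_t)-\ell(\sigma(p_t),y_t))$. With $\rho_p=\frac{\sum_t y_t\mathbb{1}\{p_t=p\}}{\sum_t\mathbb{1}\{p_t=p\}}$ ($0/0=0$) and Bernoulli KL $\mathsf{KL}(q,p)=q\log\frac qp+(1-q)\log\frac{1-q}{1-p}$, $\mathsf{KLCal}:=\sum_{p}\sum_t\mathbb{1}\{p_t=p\}\mathsf{KL}(\rho_p,p)$, the outer sum over the (finitely many) values predicted; for the log loss $\mathsf{SReg}^\ell=\mathsf{KLCal}$. *)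

theory Defs
  imports "HOL-Probability.Probability"
begin

(* Rounds are indexed t = 0, ..., T-1; outcomes y_t are booleans (True = 1).
   A deterministic forecasting strategy maps the round t and the list of past
   outcomes [y_0,...,y_{t-1}] to a prediction. A randomized algorithm is a
   probability distribution (pmf) over deterministic strategies; against an
   oblivious adversary (fixed sequence ys) this captures internal randomness. *)
type_synonym strategy = "nat \<Rightarrow> bool list \<Rightarrow> real"

definition preds :: "strategy \<Rightarrow> (nat \<Rightarrow> bool) \<Rightarrow> nat \<Rightarrow> real" where
  "preds f ys t = f t (map ys [0..<t])"

definition logloss :: "real \<Rightarrow> bool \<Rightarrow> ereal" where
  "logloss p y = (if y then (if p \<le> 0 then \<infinity> else ereal (- ln p))
                   else (if 1 \<le> p then \<infinity> else ereal (- ln (1 - p))))"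

definition SReg :: "nat \<Rightarrow> (nat \<Rightarrow> real) \<Rightarrow> (nat \<Rightarrow> bool) \<Rightarrow> ereal" where
  "SReg T ps ys = Sup {(\<Sum>t<T. logloss (ps t) (ys t) - logloss (\<sigma> (ps t)) (ys t)) | \<sigma>.
       \<forall>x\<in>{0..1}. \<sigma> x \<in> {0..1}}"

(* Bernoulli KL divergence, with 0 log 0 = 0 (Isabelle: ln 0 = 0) *)
definition KL :: "real \<Rightarrow> real \<Rightarrow> real" where
  "KL q p = q * ln (q / p) + (1 - q) * ln ((1 - q) / (1 - p))"

definition rho :: "nat \<Rightarrow> (nat \<Rightarrow> real) \<Rightarrow> (nat \<Rightarrow> bool) \<Rightarrow> real \<Rightarrow> real" where
  "rho T ps ys p = real (card {t. t < T \<and> ys t \<and> ps t = p}) / real (card {t. t < T \<and> ps t = p})"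

definition KLCal :: "nat \<Rightarrow> (nat \<Rightarrow> real) \<Rightarrow> (nat \<Rightarrow> bool) \<Rightarrow> real" where
  "KLCal T ps ys = (\<Sum>p\<in>ps ` {..<T}. real (card {t. t < T \<and> ps t = p}) * KL (rho T ps ys p) p)"

end

theory Submission
  imports Defs
begin

text \<open>The forecaster predicts only points of a finite grid whose log-odds are equally spaced by
  \<open>x\<close>, so that neighbouring grid points are within KL divergence \<open>x^2\<close>. In each round it takes,
  for every grid point \<open>p\<close>, the Laplace estimate \<open>L p\<close> of the frequency of ones among the earlier
  rounds in which it predicted \<open>p\<close>, and mixes the largest grid point with \<open>p \<le> L p\<close> and the next
  grid point, weighted so that its expected excess log loss over \<open>L\<close> does not depend on the
  outcome; that excess is then at most the KL divergence of the two neighbours, hence at most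
  \<open>x^2\<close> per round. Within each bucket of equal predictions the Laplace estimator loses at most
  \<open>ln (T + 1)\<close> against every constant forecast, in particular against the empirical frequency and
  against any swapped forecast. So the expected swap regret and KL-calibration error are both at
  most \<open>T x^2 + |S| ln (T + 1)\<close>, and a grid of \<open>2 M + 1\<close> points with
  \<open>M \<approx> T^(1/3) (ln T)^(2/3)\<close> and \<open>x = ln T / M\<close> balances the two terms.\<close>

text \<open>Junk outside \<open>0 < p < 1\<close>, where \<open>ln 0 = 0\<close> replaces the infinite loss of \<open>logloss\<close>.\<close>

definition rlogloss :: "real \<Rightarrow> bool \<Rightarrow> real" where
  "rlogloss p y = (if y then - ln p else - ln (1 - p))"

lemma logloss_eq_rlogloss: "0 < p \<Longrightarrow> p < 1 \<Longrightarrow> logloss p y = ereal (rlogloss p y)"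
  by (simp add: logloss_def rlogloss_def)

lemma logloss_finiteD:
  "logloss q y \<noteq> \<infinity> \<Longrightarrow> logloss q y = ereal (rlogloss q y) \<and> (y \<longrightarrow> 0 < q) \<and> (\<not> y \<longrightarrow> q < 1)"
  by (auto simp: logloss_def rlogloss_def split: if_splits)

lemma logloss_neq_MInf: "logloss q y \<noteq> -\<infinity>"
  by (simp add: logloss_def)

lemma KL_same: "KL p p = 0"
  by (cases "p = 0"; cases "p = 1") (auto simp: KL_def)

lemma KL_nonneg:
  assumes "0 < q" "q < 1" "0 < p" "p < 1"
  shows "0 \<le> KL q p"
proof -
  have "ln (p / q) \<le> p / q - 1" "ln ((1 - p) / (1 - q)) \<le> (1 - p) / (1 - q) - 1"
    using assms by (intro ln_le_minus_one; simp)+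
  then have "q * ln (p / q) + (1 - q) * ln ((1 - p) / (1 - q))
      \<le> q * (p / q - 1) + (1 - q) * ((1 - p) / (1 - q) - 1)"
    using assms by (intro add_mono mult_left_mono) auto
  also have "\<dots> = 0" using assms by (simp add: field_simps)
  finally show ?thesis
    using assms by (simp add: KL_def ln_div algebra_simps)
qed

lemma KL_le_chi_square:
  assumes "0 < q" "q < 1" "0 < p" "p < 1"
  shows "KL q p \<le> (q - p)^2 / (p * (1 - p))"
proof -
  have "ln (q / p) \<le> q / p - 1" "ln ((1 - q) / (1 - p)) \<le> (1 - q) / (1 - p) - 1"
    using assms by (intro ln_le_minus_one; simp)+
  then have "KL q p \<le> q * (q / p - 1) + (1 - q) * ((1 - q) / (1 - p) - 1)"
    unfolding KL_def using assms by (intro add_mono mult_left_mono) auto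
  also have "\<dots> = (q - p)^2 / (p * (1 - p))"
    using assms by (simp add: field_simps power2_eq_square)
  finally show ?thesis .
qed

lemma KL_diff_eq_expected_rlogloss_diff:
  assumes "0 < q" "q < 1" "0 < p" "p < 1" "0 < r" "r < 1"
  shows "q * (rlogloss p True - rlogloss r True) + (1 - q) * (rlogloss p False - rlogloss r False)
    = KL q p - KL q r"
  using assms by (simp add: KL_def rlogloss_def ln_div algebra_simps)

text \<open>After \<open>k\<close> ones among \<open>c\<close> outcomes, Laplace's rule of succession predicts \<open>(k + 1) / (c + 2)\<close>.
  Its cumulative log loss on any such sequence is \<open>laplace_loss c k\<close>, the negative logarithm of
  the probability \<open>k! (c - k)! / (c + 1)!\<close> that the uniform mixture of Bernoulli laws gives the
  sequence.\<close>

definition laplace_loss :: "nat \<Rightarrow> nat \<Rightarrow> real" where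
  "laplace_loss c k = ln (fact (c + 1)) - ln (fact k) - ln (fact (c - k))"

lemma laplace_loss_0_0 [simp]: "laplace_loss 0 0 = 0"
  by (simp add: laplace_loss_def)

lemma laplace_loss_Suc_True:
  assumes "k \<le> c"
  shows "laplace_loss (Suc c) (Suc k) = laplace_loss c k + rlogloss ((real k + 1) / (real c + 2)) True"
proof -
  have "(fact (Suc c + 1) :: real) = (real c + 2) * fact (c + 1)"
    "(fact (Suc k) :: real) = (real k + 1) * fact k"
    by (simp_all add: algebra_simps)
  then show ?thesis
    by (simp add: laplace_loss_def rlogloss_def ln_mult_pos ln_div add_pos_pos add.commute)
qed

lemma laplace_loss_Suc_False:
  assumes "k \<le> c"
  shows "laplace_loss (Suc c) k = laplace_loss c k + rlogloss ((real k + 1) / (real c + 2)) False"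
proof -
  have "(fact (Suc c + 1) :: real) = (real c + 2) * fact (c + 1)" by (simp add: algebra_simps)
  moreover have "Suc c - k = Suc (c - k)" using assms by simp
  moreover have "(fact (Suc (c - k)) :: real) = (real c - real k + 1) * fact (c - k)"
    using assms by (simp add: algebra_simps)
  moreover have "1 - (real k + 1) / (real c + 2) = (real c - real k + 1) / (real c + 2)"
    by (simp add: field_simps)
  moreover have "real c - real k + 1 > 0" using assms by simp
  ultimately show ?thesis
    by (simp add: laplace_loss_def rlogloss_def ln_mult_pos ln_div add_pos_pos add.commute)
qed

lemma laplace_loss_eq_ln_binomial:
  assumes "k \<le> c"
  shows "laplace_loss c k = ln (real c + 1) + ln (real (c choose k))"
proof -
  have "real (fact k * fact (c - k) * (c choose k)) = real (fact c)"
    using binomial_fact_lemma[OF assms] by simp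
  then have "(fact c :: real) = real (c choose k) * fact k * fact (c - k)"
    by (simp add: mult_ac)
  moreover have "(fact (c + 1) :: real) = (real c + 1) * fact c" by simp
  moreover have "real (c choose k) > 0" using assms by simp
  ultimately show ?thesis
    by (simp add: laplace_loss_def ln_mult)
qed

lemma ln_power: "0 < x \<or> k = 0 \<Longrightarrow> ln (x ^ k) = real k * ln x"
  by (auto simp: ln_realpow)

lemma Bernstein_le_one:
  assumes "0 \<le> x" "x \<le> 1" "k \<le> n"
  shows "Bernstein n k x \<le> 1"
proof -
  have "Bernstein n k x \<le> (\<Sum>j\<le>n. Bernstein n j x)"
    using assms by (intro member_le_sum Bernstein_nonneg) auto
  then show ?thesis by simp
qed

lemma laplace_loss_le:
  assumes "k \<le> c" "0 \<le> \<theta>" "\<theta> \<le> 1" "0 < k \<longrightarrow> 0 < \<theta>" "k < c \<longrightarrow> \<theta> < 1"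
  shows "laplace_loss c k \<le> ln (real c + 1) + real k * rlogloss \<theta> True + (real c - real k) * rlogloss \<theta> False"
proof -
  have pos: "real (c choose k) > 0" "\<theta> ^ k > 0" "(1 - \<theta>) ^ (c - k) > 0"
    using assms by (auto intro: zero_less_power)
  have "ln (\<theta> ^ k) = real k * ln \<theta>" "ln ((1 - \<theta>) ^ (c - k)) = real (c - k) * ln (1 - \<theta>)"
    using assms by (intro ln_power; force)+
  then have "ln (real (c choose k)) + real k * ln \<theta> + real (c - k) * ln (1 - \<theta>) = ln (Bernstein c k \<theta>)"
    unfolding Bernstein_def using pos by (simp add: ln_mult_pos)
  also have "\<dots> \<le> 0"
    using pos assms Bernstein_le_one[of \<theta> k c] by (simp add: Bernstein_def)
  finally show ?thesis
    using assms(1) by (simp add: laplace_loss_eq_ln_binomial rlogloss_def algebra_simps)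
qed

definition bucket_size :: "(nat \<Rightarrow> real) \<Rightarrow> nat \<Rightarrow> real \<Rightarrow> nat" where
  "bucket_size ps n p = card {t. t < n \<and> ps t = p}"

definition bucket_ones :: "(nat \<Rightarrow> real) \<Rightarrow> (nat \<Rightarrow> bool) \<Rightarrow> nat \<Rightarrow> real \<Rightarrow> nat" where
  "bucket_ones ps ys n p = card {t. t < n \<and> ys t \<and> ps t = p}"

definition bucket_laplace :: "(nat \<Rightarrow> real) \<Rightarrow> (nat \<Rightarrow> bool) \<Rightarrow> nat \<Rightarrow> real \<Rightarrow> real" where
  "bucket_laplace ps ys n p = (real (bucket_ones ps ys n p) + 1) / (real (bucket_size ps n p) + 2)"

lemma card_less_Suc_if: "card {t. t < Suc n \<and> P t} = card {t. t < n \<and> P t} + (if P n then 1 else 0)"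
proof (cases "P n")
  case True
  then have "{t. t < Suc n \<and> P t} = insert n {t. t < n \<and> P t}" by (auto simp: less_Suc_eq)
  then show ?thesis using True by simp
next
  case False
  then have "{t. t < Suc n \<and> P t} = {t. t < n \<and> P t}" by (auto simp: less_Suc_eq)
  then show ?thesis using False by simp
qed

lemma bucket_size_0 [simp]: "bucket_size ps 0 p = 0"
  and bucket_ones_0 [simp]: "bucket_ones ps ys 0 p = 0"
  by (simp_all add: bucket_size_def bucket_ones_def)

lemma bucket_size_Suc: "bucket_size ps (Suc n) p = bucket_size ps n p + (if ps n = p then 1 else 0)"
  unfolding bucket_size_def by (rule card_less_Suc_if)

lemma bucket_ones_Suc:
  "bucket_ones ps ys (Suc n) p = bucket_ones ps ys n p + (if ys n \<and> ps n = p then 1 else 0)"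
  unfolding bucket_ones_def by (rule card_less_Suc_if)

lemma bucket_ones_le_size: "bucket_ones ps ys n p \<le> bucket_size ps n p"
  unfolding bucket_ones_def bucket_size_def by (rule card_mono) auto

lemma bucket_size_le: "bucket_size ps n p \<le> n"
proof -
  have "bucket_size ps n p \<le> card {..<n}" unfolding bucket_size_def by (rule card_mono) auto
  then show ?thesis by simp
qed

lemma bucket_ones_pos_iff: "0 < bucket_ones ps ys n p \<longleftrightarrow> (\<exists>t<n. ys t \<and> ps t = p)"
  by (auto simp: bucket_ones_def card_gt_0_iff)

lemma bucket_ones_less_size_iff:
  "bucket_ones ps ys n p < bucket_size ps n p \<longleftrightarrow> (\<exists>t<n. \<not> ys t \<and> ps t = p)"
proof -
  have "bucket_size ps n p = bucket_ones ps ys n p + card {t. t < n \<and> \<not> ys t \<and> ps t = p}"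
    unfolding bucket_size_def bucket_ones_def
    by (subst card_Un_disjoint[symmetric]) (auto intro: arg_cong[where f = card])
  then show ?thesis by (auto simp: card_gt_0_iff)
qed

lemma sum_by_bucket_increments:
  assumes "finite S" "\<forall>t<n. ps t \<in> S"
    and F0: "\<And>p. F p 0 0 = 0"
    and F_Suc: "\<And>p c k y. k \<le> c \<Longrightarrow> F p (Suc c) (if y then Suc k else k) = F p c k + g p c k y"
  shows "(\<Sum>t<n. g (ps t) (bucket_size ps t (ps t)) (bucket_ones ps ys t (ps t)) (ys t))
    = (\<Sum>p\<in>S. F p (bucket_size ps n p) (bucket_ones ps ys n p))"
  using assms(2)
proof (induction n)
  case 0
  then show ?case by (simp add: F0)
next
  case (Suc n)
  have step: "F p (bucket_size ps (Suc n) p) (bucket_ones ps ys (Suc n) p)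
      = F p (bucket_size ps n p) (bucket_ones ps ys n p)
        + (if p = ps n then g p (bucket_size ps n p) (bucket_ones ps ys n p) (ys n) else 0)" for p
    using F_Suc[of "bucket_ones ps ys n p" "bucket_size ps n p" p True, OF bucket_ones_le_size]
      F_Suc[of "bucket_ones ps ys n p" "bucket_size ps n p" p False, OF bucket_ones_le_size]
    by (cases "ps n = p"; cases "ys n") (auto simp: bucket_size_Suc bucket_ones_Suc)
  have "ps n \<in> S" using Suc.prems by simp
  then have "(\<Sum>t<Suc n. g (ps t) (bucket_size ps t (ps t)) (bucket_ones ps ys t (ps t)) (ys t))
      = (\<Sum>p\<in>S. F p (bucket_size ps n p) (bucket_ones ps ys n p)
          + (if p = ps n then g p (bucket_size ps n p) (bucket_ones ps ys n p) (ys n) else 0))"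
    using Suc assms(1) by (simp add: sum.distrib)
  also have "\<dots> = (\<Sum>p\<in>S. F p (bucket_size ps (Suc n) p) (bucket_ones ps ys (Suc n) p))"
    by (simp only: step)
  finally show ?case .
qed

lemma sum_by_bucket:
  assumes "finite S" "\<forall>t<n. ps t \<in> S"
  shows "(\<Sum>t<n. h (ps t) (ys t)) = (\<Sum>p\<in>S. real (bucket_ones ps ys n p) * h p True
    + (real (bucket_size ps n p) - real (bucket_ones ps ys n p)) * h p False)"
  by (rule sum_by_bucket_increments[OF assms, where g = "\<lambda>p c k y. h p y"]) (auto simp: algebra_simps)

lemma sum_rlogloss_bucket_laplace:
  assumes "finite S" "\<forall>t<n. ps t \<in> S"
  shows "(\<Sum>t<n. rlogloss (bucket_laplace ps ys t (ps t)) (ys t))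
    = (\<Sum>p\<in>S. laplace_loss (bucket_size ps n p) (bucket_ones ps ys n p))"
  unfolding bucket_laplace_def
  by (rule sum_by_bucket_increments[OF assms])
     (auto simp: laplace_loss_Suc_True laplace_loss_Suc_False)

definition laplace_excess :: "(nat \<Rightarrow> real) \<Rightarrow> (nat \<Rightarrow> bool) \<Rightarrow> nat \<Rightarrow> real" where
  "laplace_excess ps ys n =
    (\<Sum>t<n. rlogloss (ps t) (ys t) - rlogloss (bucket_laplace ps ys t (ps t)) (ys t))"

lemma sum_rlogloss_bucket_laplace_le:
  assumes S: "finite S" "\<forall>t<T. ps t \<in> S" and \<sigma>: "\<forall>p\<in>S. 0 \<le> \<sigma> p \<and> \<sigma> p \<le> 1"
    and \<sigma>_pos: "\<forall>t<T. (ys t \<longrightarrow> 0 < \<sigma> (ps t)) \<and> (\<not> ys t \<longrightarrow> \<sigma> (ps t) < 1)"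
  shows "(\<Sum>t<T. rlogloss (bucket_laplace ps ys t (ps t)) (ys t))
    \<le> (\<Sum>t<T. rlogloss (\<sigma> (ps t)) (ys t)) + real (card S) * ln (real T + 1)"
proof -
  let ?c = "\<lambda>p. bucket_size ps T p" and ?k = "\<lambda>p. bucket_ones ps ys T p"
  have bucket: "laplace_loss (?c p) (?k p) \<le> ln (real T + 1)
      + (real (?k p) * rlogloss (\<sigma> p) True + (real (?c p) - real (?k p)) * rlogloss (\<sigma> p) False)"
    if "p \<in> S" for p
  proof -
    have "laplace_loss (?c p) (?k p) \<le> ln (real (?c p) + 1)
        + real (?k p) * rlogloss (\<sigma> p) True + (real (?c p) - real (?k p)) * rlogloss (\<sigma> p) False"
      using \<sigma> \<sigma>_pos that
      by (intro laplace_loss_le bucket_ones_le_size) (auto simp: bucket_ones_pos_iff bucket_ones_less_size_iff)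
    moreover have "ln (real (?c p) + 1) \<le> ln (real T + 1)"
      using bucket_size_le[of ps T p] by simp
    ultimately show ?thesis by linarith
  qed
  have "(\<Sum>t<T. rlogloss (bucket_laplace ps ys t (ps t)) (ys t)) = (\<Sum>p\<in>S. laplace_loss (?c p) (?k p))"
    by (rule sum_rlogloss_bucket_laplace[OF S])
  also have "\<dots> \<le> (\<Sum>p\<in>S. ln (real T + 1)
      + (real (?k p) * rlogloss (\<sigma> p) True + (real (?c p) - real (?k p)) * rlogloss (\<sigma> p) False))"
    using bucket by (rule sum_mono)
  also have "\<dots> = real (card S) * ln (real T + 1) + (\<Sum>t<T. rlogloss (\<sigma> (ps t)) (ys t))"
    using sum_by_bucket[OF S, of "\<lambda>p. rlogloss (\<sigma> p)" ys] by (simp add: sum.distrib)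
  finally show ?thesis by simp
qed

lemma sum_rlogloss_diff_le_laplace_excess:
  assumes "finite S" "\<forall>t<T. ps t \<in> S" "\<forall>p\<in>S. 0 \<le> \<sigma> p \<and> \<sigma> p \<le> 1"
    and "\<forall>t<T. (ys t \<longrightarrow> 0 < \<sigma> (ps t)) \<and> (\<not> ys t \<longrightarrow> \<sigma> (ps t) < 1)"
  shows "(\<Sum>t<T. rlogloss (ps t) (ys t) - rlogloss (\<sigma> (ps t)) (ys t))
    \<le> laplace_excess ps ys T + real (card S) * ln (real T + 1)"
  using sum_rlogloss_bucket_laplace_le[OF assms] by (simp add: laplace_excess_def sum_subtractf)

lemma sum_ereal_eq_MInfty:
  fixes f :: "'a \<Rightarrow> ereal"
  assumes "finite I" "i \<in> I" "f i = -\<infinity>" "\<forall>j\<in>I. f j \<noteq> \<infinity>"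
  shows "sum f I = -\<infinity>"
proof -
  have "sum f I = f i + sum f (I - {i})" using assms by (simp add: sum.remove)
  moreover have "sum f (I - {i}) \<noteq> \<infinity>" using assms by (simp add: sum_Pinfty)
  ultimately show ?thesis using assms(3) by simp
qed

lemma SReg_le_laplace_excess:
  assumes S: "finite S" "S \<subseteq> {0<..<1}" and ps: "\<forall>t<T. ps t \<in> S"
  shows "SReg T ps ys \<le> ereal (laplace_excess ps ys T + real (card S) * ln (real T + 1))"
  unfolding SReg_def
proof (rule Sup_least, clarify)
  fix \<sigma> :: "real \<Rightarrow> real"
  assume \<sigma>: "\<forall>x\<in>{0..1}. \<sigma> x \<in> {0..1}"
  have ps_loss: "logloss (ps t) (ys t) = ereal (rlogloss (ps t) (ys t))" if "t < T" for t
    using ps S(2) that by (intro logloss_eq_rlogloss) auto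
  show "(\<Sum>t<T. logloss (ps t) (ys t) - logloss (\<sigma> (ps t)) (ys t))
      \<le> ereal (laplace_excess ps ys T + real (card S) * ln (real T + 1))"
  proof (cases "\<exists>t<T. logloss (\<sigma> (ps t)) (ys t) = \<infinity>")
    case True
    then obtain t0 where "t0 < T" "logloss (\<sigma> (ps t0)) (ys t0) = \<infinity>" by blast
    moreover have "logloss (ps t) (ys t) - logloss (\<sigma> (ps t)) (ys t) \<noteq> \<infinity>" if "t < T" for t
      using ps_loss[OF that] logloss_neq_MInf[of "\<sigma> (ps t)" "ys t"]
      by (cases "logloss (\<sigma> (ps t)) (ys t)") auto
    ultimately have "(\<Sum>t<T. logloss (ps t) (ys t) - logloss (\<sigma> (ps t)) (ys t)) = -\<infinity>"
      by (intro sum_ereal_eq_MInfty[of _ t0]) (auto simp: ps_loss)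
    then show ?thesis by simp
  next
    case False
    then have finite_loss: "logloss (\<sigma> (ps t)) (ys t) = ereal (rlogloss (\<sigma> (ps t)) (ys t))
        \<and> (ys t \<longrightarrow> 0 < \<sigma> (ps t)) \<and> (\<not> ys t \<longrightarrow> \<sigma> (ps t) < 1)" if "t < T" for t
      using that logloss_finiteD by blast
    have "(\<Sum>t<T. logloss (ps t) (ys t) - logloss (\<sigma> (ps t)) (ys t))
        = (\<Sum>t<T. ereal (rlogloss (ps t) (ys t) - rlogloss (\<sigma> (ps t)) (ys t)))"
      using finite_loss ps_loss by (intro sum.cong) auto
    also have "\<dots> = ereal (\<Sum>t<T. rlogloss (ps t) (ys t) - rlogloss (\<sigma> (ps t)) (ys t))"
      by (rule sum_ereal)
    also have "\<dots> \<le> ereal (laplace_excess ps ys T + real (card S) * ln (real T + 1))"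
      unfolding ereal_less_eq using \<sigma> S finite_loss
      by (intro sum_rlogloss_diff_le_laplace_excess[OF S(1) ps]) auto
    finally show ?thesis .
  qed
qed

lemma SReg_nonneg:
  assumes "\<forall>t<T. 0 < ps t \<and> ps t < 1"
  shows "0 \<le> SReg T ps ys"
  unfolding SReg_def
proof (rule Sup_upper2)
  show "(\<Sum>t<T. logloss (ps t) (ys t) - logloss (id (ps t)) (ys t))
      \<in> {\<Sum>t<T. logloss (ps t) (ys t) - logloss (\<sigma> (ps t)) (ys t) |\<sigma>. \<forall>x\<in>{0..1}. \<sigma> x \<in> {0..1}}"
    by (rule CollectI, rule exI[of _ id]) auto
  show "0 \<le> (\<Sum>t<T. logloss (ps t) (ys t) - logloss (id (ps t)) (ys t))"
    using assms by (simp add: logloss_eq_rlogloss)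
qed

lemma laplace_excess_bound_nonneg:
  assumes "finite S" "S \<subseteq> {0<..<1}" "\<forall>t<T. ps t \<in> S"
  shows "0 \<le> laplace_excess ps ys T + real (card S) * ln (real T + 1)"
proof -
  have "0 \<le> SReg T ps ys" using assms by (intro SReg_nonneg) auto
  also have "\<dots> \<le> ereal (laplace_excess ps ys T + real (card S) * ln (real T + 1))"
    using assms by (rule SReg_le_laplace_excess)
  finally show ?thesis by simp
qed

text \<open>For \<open>k = 0\<close> or \<open>k = c\<close> the junk value \<open>ln 0 = 0\<close> plays the role of the convention
  \<open>0 ln 0 = 0\<close> in \<open>KL\<close>.\<close>

lemma KL_bucket_eq:
  assumes "k \<le> c" "0 < p" "p < 1"
  shows "real c * KL (real k / real c) p
    = real k * (rlogloss p True - rlogloss (real k / real c) True)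
      + (real c - real k) * (rlogloss p False - rlogloss (real k / real c) False)"
proof (cases "k = 0 \<or> k = c")
  case True
  then show ?thesis using assms by (auto simp: KL_def rlogloss_def ln_div ln_mult)
next
  case False
  define \<rho> where "\<rho> = real k / real c"
  have \<rho>: "0 < \<rho>" "\<rho> < 1" "real c * \<rho> = real k" "real c * (1 - \<rho>) = real c - real k"
    using False assms(1) by (auto simp: \<rho>_def field_simps)
  have "KL \<rho> p = \<rho> * (ln \<rho> - ln p) + (1 - \<rho>) * (ln (1 - \<rho>) - ln (1 - p))"
    using \<rho> assms by (simp add: KL_def ln_div)
  then have "real c * KL \<rho> p
      = (real c * \<rho>) * (ln \<rho> - ln p) + (real c * (1 - \<rho>)) * (ln (1 - \<rho>) - ln (1 - p))"
    by (simp add: distrib_left mult.assoc)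
  then show ?thesis
    unfolding \<rho>_def[symmetric] \<rho>(3,4) by (simp add: rlogloss_def algebra_simps)
qed

lemma rho_eq: "rho T ps ys p = real (bucket_ones ps ys T p) / real (bucket_size ps T p)"
  by (simp add: rho_def bucket_ones_def bucket_size_def)

lemma KLCal_eq_sum_rlogloss_diff:
  assumes "\<forall>t<T. 0 < ps t \<and> ps t < 1"
  shows "KLCal T ps ys = (\<Sum>t<T. rlogloss (ps t) (ys t) - rlogloss (rho T ps ys (ps t)) (ys t))"
proof -
  let ?c = "\<lambda>p. bucket_size ps T p" and ?k = "\<lambda>p. bucket_ones ps ys T p"
  have "(\<Sum>t<T. rlogloss (ps t) (ys t) - rlogloss (rho T ps ys (ps t)) (ys t))
      = (\<Sum>p\<in>ps ` {..<T}. real (?k p) * (rlogloss p True - rlogloss (rho T ps ys p) True)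
          + (real (?c p) - real (?k p)) * (rlogloss p False - rlogloss (rho T ps ys p) False))"
    by (rule sum_by_bucket) auto
  also have "\<dots> = (\<Sum>p\<in>ps ` {..<T}. real (?c p) * KL (rho T ps ys p) p)"
    using assms by (intro sum.cong refl) (auto simp: rho_eq intro!: KL_bucket_eq[symmetric] bucket_ones_le_size)
  finally show ?thesis by (simp add: KLCal_def bucket_size_def)
qed

lemma rho_nonneg: "0 \<le> rho T ps ys p"
  and rho_le_one: "rho T ps ys p \<le> 1"
  using bucket_ones_le_size[of ps ys T p] by (auto simp: rho_eq divide_le_eq_1)

lemma rho_pos: "t < T \<Longrightarrow> ys t \<Longrightarrow> 0 < rho T ps ys (ps t)"
  using bucket_ones_pos_iff[of ps ys T "ps t"] bucket_ones_le_size[of ps ys T "ps t"]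
  by (auto simp: rho_eq)

lemma rho_less_one: "t < T \<Longrightarrow> \<not> ys t \<Longrightarrow> rho T ps ys (ps t) < 1"
  using bucket_ones_less_size_iff[of ps ys T "ps t"] by (auto simp: rho_eq)

lemma KLCal_le_laplace_excess:
  assumes S: "finite S" "S \<subseteq> {0<..<1}" and ps: "\<forall>t<T. ps t \<in> S"
  shows "KLCal T ps ys \<le> laplace_excess ps ys T + real (card S) * ln (real T + 1)"
proof -
  have "KLCal T ps ys = (\<Sum>t<T. rlogloss (ps t) (ys t) - rlogloss (rho T ps ys (ps t)) (ys t))"
    using S ps by (intro KLCal_eq_sum_rlogloss_diff) auto
  also have "\<dots> \<le> laplace_excess ps ys T + real (card S) * ln (real T + 1)"
    by (rule sum_rlogloss_diff_le_laplace_excess[OF S(1) ps])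
       (auto simp: rho_nonneg rho_le_one rho_pos rho_less_one)
  finally show ?thesis .
qed

definition excess_gap :: "real \<Rightarrow> real \<Rightarrow> real" where
  "excess_gap p q = (rlogloss p True - rlogloss q True) - (rlogloss p False - rlogloss q False)"

lemma excess_gap_nonneg:
  assumes "0 < p" "p \<le> q" "q < 1"
  shows "0 \<le> excess_gap p q"
proof -
  have "ln p \<le> ln q" "ln (1 - q) \<le> ln (1 - p)" using assms by simp_all
  then show ?thesis by (simp add: excess_gap_def rlogloss_def)
qed

lemma excess_gap_nonpos:
  assumes "0 < q" "q \<le> p" "p < 1"
  shows "excess_gap p q \<le> 0"
proof -
  have "ln q \<le> ln p" "ln (1 - p) \<le> ln (1 - q)" using assms by simp_all
  then show ?thesis by (simp add: excess_gap_def rlogloss_def)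
qed

definition balancing_weight :: "real \<Rightarrow> real \<Rightarrow> real" where
  "balancing_weight a b = (if a = b then 1 else b / (b - a))"

lemma balancing_weight:
  assumes "b \<le> 0" "0 \<le> a"
  shows "0 \<le> balancing_weight a b" "balancing_weight a b \<le> 1"
    "balancing_weight a b * a + (1 - balancing_weight a b) * b = 0"
proof -
  consider "a = b" | "b - a < 0" using assms by fastforce
  then show "0 \<le> balancing_weight a b" "balancing_weight a b \<le> 1"
    "balancing_weight a b * a + (1 - balancing_weight a b) * b = 0"
    by cases (use assms in \<open>auto simp: balancing_weight_def field_simps\<close>)
qed

text \<open>The weight makes the expected excess loss independent of the outcome, so it may be evaluated
  under outcomes drawn with probability \<open>x\<close>, where it becomes a difference of KL divergences.\<close>

lemma balanced_mixture_excess_le: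
  assumes "0 < x" "x \<le> qx" "qx < 1" "0 < qz" "qz \<le> z" "z < 1"
  defines "w \<equiv> balancing_weight (excess_gap x qx) (excess_gap z qz)"
  shows "w * (rlogloss x y - rlogloss qx y) + (1 - w) * (rlogloss z y - rlogloss qz y) \<le> KL x z"
proof -
  define E where "E y = w * (rlogloss x y - rlogloss qx y) + (1 - w) * (rlogloss z y - rlogloss qz y)" for y
  have w: "0 \<le> w" "w \<le> 1" "w * excess_gap x qx + (1 - w) * excess_gap z qz = 0"
    unfolding w_def using assms
    by (intro balancing_weight excess_gap_nonneg excess_gap_nonpos; simp)+
  have "E True = E False"
    using w(3) by (simp add: E_def excess_gap_def algebra_simps)
  then have "E y = x * E True + (1 - x) * E False"
    by (cases y) (simp_all add: algebra_simps)
  also have "\<dots> = w * (x * (rlogloss x True - rlogloss qx True) + (1 - x) * (rlogloss x False - rlogloss qx False))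
      + (1 - w) * (x * (rlogloss z True - rlogloss qz True) + (1 - x) * (rlogloss z False - rlogloss qz False))"
    by (simp add: E_def algebra_simps)
  also have "\<dots> = w * (KL x x - KL x qx) + (1 - w) * (KL x z - KL x qz)"
    using assms by (simp add: KL_diff_eq_expected_rlogloss_diff)
  also have "\<dots> \<le> w * 0 + (1 - w) * KL x z"
    using assms w KL_nonneg[of x qx] KL_nonneg[of x qz] by (intro add_mono mult_left_mono) (auto simp: KL_same)
  also have "\<dots> \<le> KL x z"
    using assms w KL_nonneg[of x z] by (simp add: mult_left_le_one_le)
  finally show ?thesis unfolding E_def .
qed

definition lower_crossing :: "real set \<Rightarrow> real \<Rightarrow> (real \<Rightarrow> real) \<Rightarrow> real" where
  "lower_crossing S p0 L = (if {p\<in>S. p \<le> L p} = {} then p0 else Max {p\<in>S. p \<le> L p})"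

definition upper_crossing :: "real set \<Rightarrow> real \<Rightarrow> (real \<Rightarrow> real) \<Rightarrow> real" where
  "upper_crossing S p0 L =
    (let x = lower_crossing S p0 L in if {q\<in>S. x < q} = {} then x else Min {q\<in>S. x < q})"

definition forecast_step :: "real set \<Rightarrow> real \<Rightarrow> (real \<Rightarrow> real) \<Rightarrow> real pmf" where
  "forecast_step S p0 L =
    (let x = lower_crossing S p0 L; z = upper_crossing S p0 L
     in map_pmf (\<lambda>b. if b then x else z)
          (bernoulli_pmf (balancing_weight (excess_gap x (L x)) (excess_gap z (L z)))))"

definition neighbour_KL_le :: "real set \<Rightarrow> real \<Rightarrow> bool" where
  "neighbour_KL_le S \<epsilon> \<longleftrightarrow> (\<forall>p\<in>S. \<forall>p'\<in>S. p < p' \<and> (\<forall>q\<in>S. \<not> (p < q \<and> q < p')) \<longrightarrow> KL p p' \<le> \<epsilon>)"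

lemma neighbour_KL_le_mono: "neighbour_KL_le S \<epsilon> \<Longrightarrow> \<epsilon> \<le> \<epsilon>' \<Longrightarrow> neighbour_KL_le S \<epsilon>'"
  unfolding neighbour_KL_le_def by force

lemma lower_crossing_in: "finite S \<Longrightarrow> p0 \<in> S \<Longrightarrow> lower_crossing S p0 L \<in> S"
  unfolding lower_crossing_def using Max_in[of "{p\<in>S. p \<le> L p}"] by auto

lemma upper_crossing_in: "finite S \<Longrightarrow> p0 \<in> S \<Longrightarrow> upper_crossing S p0 L \<in> S"
  unfolding upper_crossing_def Let_def
  using Min_in[of "{q\<in>S. lower_crossing S p0 L < q}"] lower_crossing_in[of S p0 L] by auto

lemma set_pmf_forecast_step: "finite S \<Longrightarrow> p0 \<in> S \<Longrightarrow> set_pmf (forecast_step S p0 L) \<subseteq> S"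
  unfolding forecast_step_def Let_def using lower_crossing_in upper_crossing_in by auto

lemma crossings:
  fixes p0 :: real
  assumes S: "finite S" and ab: "a \<in> S" "b \<in> S" "\<forall>p\<in>S. a \<le> L p \<and> L p \<le> b"
    and \<epsilon>: "neighbour_KL_le S \<epsilon>" "0 \<le> \<epsilon>"
  defines "x \<equiv> lower_crossing S p0 L" and "z \<equiv> upper_crossing S p0 L"
  shows "x \<in> S" "x \<le> L x" "z \<in> S" "L z \<le> z" "KL x z \<le> \<epsilon>"
proof -
  let ?P = "{p\<in>S. p \<le> L p}"
  have "?P \<noteq> {}" using ab by auto
  then have x: "x = Max ?P" unfolding x_def lower_crossing_def by (rule if_not_P)
  have "x \<in> ?P" unfolding x using S \<open>?P \<noteq> {}\<close> by (intro Max_in) auto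
  then show "x \<in> S" "x \<le> L x" by auto
  have x_max: "p \<le> x" if "p \<in> S" "p \<le> L p" for p
    using that x S by auto
  have "z \<in> S \<and> L z \<le> z \<and> KL x z \<le> \<epsilon>"
  proof (cases "{q\<in>S. x < q} = {}")
    case True
    then have "z = x" unfolding z_def upper_crossing_def x_def[symmetric] by simp
    moreover have "L x \<le> x"
      using True ab \<open>x \<in> S\<close> by force
    ultimately show ?thesis using \<open>x \<in> S\<close> \<epsilon> by (simp add: KL_same)
  next
    case False
    then have z: "z = Min {q\<in>S. x < q}"
      unfolding z_def upper_crossing_def Let_def x_def[symmetric] by (rule if_not_P)
    with False S have "z \<in> S" "x < z" using Min_in[of "{q\<in>S. x < q}"] by auto
    moreover have "z \<le> q" if "q \<in> S" "x < q" for q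
      unfolding z using S that by (intro Min_le) auto
    moreover have "\<not> z \<le> L z" using x_max \<open>z \<in> S\<close> \<open>x < z\<close> by force
    ultimately show ?thesis
      using \<epsilon>(1) \<open>x \<in> S\<close> unfolding neighbour_KL_le_def by force
  qed
  then show "z \<in> S" "L z \<le> z" "KL x z \<le> \<epsilon>" by auto
qed

lemma expectation_forecast_step_le:
  assumes S: "finite S" "S \<subseteq> {0<..<1}" and ab: "a \<in> S" "b \<in> S" "\<forall>p\<in>S. a \<le> L p \<and> L p \<le> b"
    and \<epsilon>: "neighbour_KL_le S \<epsilon>" "0 \<le> \<epsilon>"
  shows "measure_pmf.expectation (forecast_step S p0 L) (\<lambda>p. rlogloss p y - rlogloss (L p) y) \<le> \<epsilon>"
proof -
  define x where "x = lower_crossing S p0 L"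
  define z where "z = upper_crossing S p0 L"
  define w where "w = balancing_weight (excess_gap x (L x)) (excess_gap z (L z))"
  note xz = crossings[OF S(1) ab \<epsilon>, of p0, folded x_def z_def]
  have unit: "0 < p \<and> p < 1" if "p \<in> S" for p using S(2) that by auto
  have bounds: "0 < x" "x \<le> L x" "L x < 1" "0 < L z" "L z \<le> z" "z < 1"
    using xz unit[of x] unit[of z] unit[OF ab(1)] unit[OF ab(2)] ab(3) by force+
  have "w \<in> {0..1}"
    unfolding w_def using bounds by (auto intro!: balancing_weight excess_gap_nonneg excess_gap_nonpos)
  then have "measure_pmf.expectation (forecast_step S p0 L) (\<lambda>p. rlogloss p y - rlogloss (L p) y)
      = w * (rlogloss x y - rlogloss (L x) y) + (1 - w) * (rlogloss z y - rlogloss (L z) y)"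
    unfolding forecast_step_def Let_def x_def[symmetric] z_def[symmetric] w_def[symmetric] by simp
  also have "\<dots> \<le> KL x z"
    unfolding w_def using bounds by (rule balanced_mixture_excess_le)
  also have "\<dots> \<le> \<epsilon>" by (fact xz(5))
  finally show ?thesis .
qed

definition history_preds :: "strategy \<Rightarrow> bool list \<Rightarrow> nat \<Rightarrow> real" where
  "history_preds f xs t = f t (take t xs)"

text \<open>The forecast of round \<open>n\<close> is drawn independently for every history of length \<open>n\<close>;
  an oblivious adversary only ever meets the realised history, so this is the forecaster that
  randomizes afresh in every round.\<close>

definition round_pmf :: "real set \<Rightarrow> real \<Rightarrow> strategy \<Rightarrow> nat \<Rightarrow> (bool list \<Rightarrow> real) pmf" where
  "round_pmf S p0 f n = Pi_pmf {xs. length xs = n} p0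
    (\<lambda>xs. forecast_step S p0 (bucket_laplace (history_preds f xs) (\<lambda>t. xs ! t) n))"

primrec forecaster :: "real set \<Rightarrow> real \<Rightarrow> nat \<Rightarrow> strategy pmf" where
  "forecaster S p0 0 = return_pmf (\<lambda>t xs. p0)"
| "forecaster S p0 (Suc n) = forecaster S p0 n \<bind> (\<lambda>f. map_pmf (\<lambda>g. f(n := g)) (round_pmf S p0 f n))"

lemma finite_bool_lists_length: "finite {xs :: bool list. length xs = n}"
  using finite_lists_length_eq[of "UNIV :: bool set" n] by simp

lemma finite_set_Pi_pmf:
  assumes "finite A" "\<And>x. x \<in> A \<Longrightarrow> finite (set_pmf (p x))"
  shows "finite (set_pmf (Pi_pmf A dflt p))"
  using assms by (simp add: set_Pi_pmf finite_PiE_dflt)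

lemma finite_set_round_pmf:
  assumes "finite S" "p0 \<in> S"
  shows "finite (set_pmf (round_pmf S p0 f n))"
  unfolding round_pmf_def using finite_bool_lists_length set_pmf_forecast_step[OF assms] assms(1)
  by (intro finite_set_Pi_pmf) (auto intro: finite_subset)

lemma round_pmf_values_in:
  assumes "finite S" "p0 \<in> S" "g \<in> set_pmf (round_pmf S p0 f n)"
  shows "g xs \<in> S"
  using assms set_pmf_forecast_step[OF assms(1,2)]
  by (cases "length xs = n") (auto simp: round_pmf_def set_Pi_pmf[OF finite_bool_lists_length] PiE_dflt_def)

lemma finite_set_forecaster: "finite S \<Longrightarrow> p0 \<in> S \<Longrightarrow> finite (set_pmf (forecaster S p0 n))"
  by (induction n) (auto simp: finite_set_round_pmf)

lemma forecaster_values_in: "finite S \<Longrightarrow> p0 \<in> S \<Longrightarrow> f \<in> set_pmf (forecaster S p0 n) \<Longrightarrow> f t xs \<in> S"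
proof (induction n arbitrary: f)
  case (Suc n)
  then show ?case by (auto intro: round_pmf_values_in)
qed simp

lemma expectation_bind_pmf_finite:
  fixes h :: "'b \<Rightarrow> real"
  assumes "finite (set_pmf M)" "\<And>x. x \<in> set_pmf M \<Longrightarrow> finite (set_pmf (N x))"
  shows "measure_pmf.expectation (M \<bind> N) h
    = measure_pmf.expectation M (\<lambda>x. measure_pmf.expectation (N x) h)"
proof -
  have "measure_pmf.expectation (M \<bind> N) h
      = (\<Sum>a\<in>set_pmf M. pmf M a *\<^sub>R measure_pmf.expectation (N a) h)"
    using assms by (intro pmf_expectation_bind) auto
  also have "\<dots> = measure_pmf.expectation M (\<lambda>x. measure_pmf.expectation (N x) h)"
    using assms by (intro integral_measure_pmf[symmetric]) auto
  finally show ?thesis .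
qed

lemma nn_integral_pmf_le:
  fixes h :: "'a \<Rightarrow> real"
  assumes "finite (set_pmf A)" "\<And>x. x \<in> set_pmf A \<Longrightarrow> g x \<le> ennreal (h x)"
    and "\<And>x. x \<in> set_pmf A \<Longrightarrow> 0 \<le> h x" "measure_pmf.expectation A h \<le> B"
  shows "(\<integral>\<^sup>+x. g x \<partial>measure_pmf A) \<le> ennreal B"
proof -
  have "(\<integral>\<^sup>+x. g x \<partial>measure_pmf A) \<le> (\<integral>\<^sup>+x. ennreal (h x) \<partial>measure_pmf A)"
    using assms(2) by (intro nn_integral_mono_AE) (simp add: AE_measure_pmf_iff)
  also have "\<dots> = ennreal (measure_pmf.expectation A h)"
    using assms by (intro nn_integral_eq_integral integrable_measure_pmf_finite) (auto simp: AE_measure_pmf_iff)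
  also have "\<dots> \<le> ennreal B" using assms(4) by (rule ennreal_leI)
  finally show ?thesis .
qed

lemma nn_integral_SReg_KLCal_le:
  assumes S: "finite S" "S \<subseteq> {0<..<1}" and A: "finite (set_pmf A)" "\<forall>f\<in>set_pmf A. \<forall>t xs. f t xs \<in> S"
    and B: "measure_pmf.expectation A (\<lambda>f. laplace_excess (preds f ys) ys T) + real (card S) * ln (real T + 1) \<le> B"
  shows "(\<integral>\<^sup>+f. e2ennreal (SReg T (preds f ys) ys) \<partial>measure_pmf A) \<le> ennreal B"
    and "(\<integral>\<^sup>+f. ennreal (KLCal T (preds f ys) ys) \<partial>measure_pmf A) \<le> ennreal B"
proof -
  define Q where "Q f = laplace_excess (preds f ys) ys T + real (card S) * ln (real T + 1)" for f
  have ps: "\<forall>t<T. preds f ys t \<in> S" if "f \<in> set_pmf A" for f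
    using that A(2) unfolding preds_def by blast
  have Q_nonneg: "0 \<le> Q f" if "f \<in> set_pmf A" for f
    unfolding Q_def using S ps[OF that] by (rule laplace_excess_bound_nonneg)
  have "measure_pmf.expectation A Q
      = measure_pmf.expectation A (\<lambda>f. laplace_excess (preds f ys) ys T) + real (card S) * ln (real T + 1)"
    unfolding Q_def using A(1) by (subst Bochner_Integration.integral_add) (auto intro: integrable_measure_pmf_finite)
  with B have EQ: "measure_pmf.expectation A Q \<le> B" by simp
  have "e2ennreal (SReg T (preds f ys) ys) \<le> ennreal (Q f)" if "f \<in> set_pmf A" for f
    using e2ennreal_mono[OF SReg_le_laplace_excess[OF S ps[OF that]]] by (simp add: Q_def)
  then show "(\<integral>\<^sup>+f. e2ennreal (SReg T (preds f ys) ys) \<partial>measure_pmf A) \<le> ennreal B"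
    using A(1) Q_nonneg EQ by (intro nn_integral_pmf_le)
  have "ennreal (KLCal T (preds f ys) ys) \<le> ennreal (Q f)" if "f \<in> set_pmf A" for f
    unfolding Q_def using S ps[OF that] by (intro ennreal_leI KLCal_le_laplace_excess)
  then show "(\<integral>\<^sup>+f. ennreal (KLCal T (preds f ys) ys) \<partial>measure_pmf A) \<le> ennreal B"
    using A(1) Q_nonneg EQ by (intro nn_integral_pmf_le)
qed

lemma bucket_laplace_cong:
  assumes "\<forall>s<t. ps s = ps' s \<and> ys s = ys' s"
  shows "bucket_laplace ps ys t p = bucket_laplace ps' ys' t p"
proof -
  have "{s. s < t \<and> ps s = p} = {s. s < t \<and> ps' s = p}"
    "{s. s < t \<and> ys s \<and> ps s = p} = {s. s < t \<and> ys' s \<and> ps' s = p}"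
    using assms by auto
  then show ?thesis by (simp add: bucket_laplace_def bucket_size_def bucket_ones_def)
qed

lemma bucket_laplace_bounds:
  assumes "n < T"
  shows "1 / (real T + 1) \<le> bucket_laplace ps ys n p" "bucket_laplace ps ys n p \<le> real T / (real T + 1)"
proof -
  define c where "c = real (bucket_size ps n p)"
  define k where "k = real (bucket_ones ps ys n p)"
  have ck: "c + 1 \<le> real T" "0 \<le> k" "k \<le> c"
    using bucket_size_le[of ps n p] bucket_ones_le_size[of ps ys n p] assms unfolding c_def k_def by auto
  have L: "bucket_laplace ps ys n p = (k + 1) / (c + 2)"
    unfolding bucket_laplace_def c_def k_def ..
  have "1 / (real T + 1) \<le> 1 / (c + 2)" using ck by (intro divide_left_mono) auto
  also have "\<dots> \<le> (k + 1) / (c + 2)" using ck by (intro divide_right_mono) auto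
  finally show "1 / (real T + 1) \<le> bucket_laplace ps ys n p" unfolding L .
  have "(k + 1) / (c + 2) \<le> (c + 1) / (c + 2)" using ck by (intro divide_right_mono) auto
  also have "\<dots> \<le> real T / (real T + 1)" using ck by (simp add: field_simps)
  finally show "bucket_laplace ps ys n p \<le> real T / (real T + 1)" unfolding L .
qed

lemma laplace_excess_cong:
  assumes "\<forall>s<n. ps s = ps' s"
  shows "laplace_excess ps ys n = laplace_excess ps' ys n"
  unfolding laplace_excess_def
proof (intro sum.cong refl)
  fix t assume "t \<in> {..<n}"
  then have "bucket_laplace ps ys t p = bucket_laplace ps' ys t p" for p
    using assms by (intro bucket_laplace_cong) auto
  then show "rlogloss (ps t) (ys t) - rlogloss (bucket_laplace ps ys t (ps t)) (ys t)
      = rlogloss (ps' t) (ys t) - rlogloss (bucket_laplace ps' ys t (ps' t)) (ys t)"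
    using assms \<open>t \<in> {..<n}\<close> by simp
qed

lemma laplace_excess_Suc: "laplace_excess ps ys (Suc n)
    = laplace_excess ps ys n + (rlogloss (ps n) (ys n) - rlogloss (bucket_laplace ps ys n (ps n)) (ys n))"
  unfolding laplace_excess_def by simp

lemma preds_fun_upd: "preds (f(n := g)) ys t = (if t = n then g (map ys [0..<n]) else preds f ys t)"
  unfolding preds_def by simp

locale forecasting_grid =
  fixes S :: "real set" and p0 :: real and T :: nat and \<epsilon> :: real and a b :: real
  assumes S: "finite S" "S \<subseteq> {0<..<1}" "p0 \<in> S"
    and a: "a \<in> S" "a \<le> 1 / (real T + 1)" and b: "b \<in> S" "real T / (real T + 1) \<le> b"
    and \<epsilon>: "neighbour_KL_le S \<epsilon>" "0 \<le> \<epsilon>"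
begin

lemma expectation_round_laplace_excess_le:
  assumes "n < T"
  shows "measure_pmf.expectation (round_pmf S p0 f n) (\<lambda>g. laplace_excess (preds (f(n := g)) ys) ys (Suc n))
    \<le> laplace_excess (preds f ys) ys n + \<epsilon>"
proof -
  define xs where "xs = map ys [0..<n]"
  define L where "L = bucket_laplace (preds f ys) ys n"
  define excess where "excess p = rlogloss p (ys n) - rlogloss (L p) (ys n)" for p
  have L_upd: "bucket_laplace (preds (f(n := g)) ys) ys n = L" for g
    unfolding L_def by (intro ext bucket_laplace_cong) (auto simp: preds_fun_upd)
  have excess_upd: "laplace_excess (preds (f(n := g)) ys) ys (Suc n)
      = laplace_excess (preds f ys) ys n + excess (g xs)" for g
    unfolding laplace_excess_Suc L_upd excess_def
    by (subst laplace_excess_cong[of _ "preds f ys"]) (auto simp: preds_fun_upd xs_def)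
  have "bucket_laplace (history_preds f xs) (\<lambda>t. xs ! t) n = L"
    unfolding L_def by (intro ext bucket_laplace_cong) (auto simp: history_preds_def preds_def xs_def take_map)
  moreover have "length xs = n" by (simp add: xs_def)
  ultimately have "map_pmf (\<lambda>g. g xs) (round_pmf S p0 f n) = forecast_step S p0 L"
    unfolding round_pmf_def Pi_pmf_component[OF finite_bool_lists_length] by simp
  then have "measure_pmf.expectation (round_pmf S p0 f n) (\<lambda>g. excess (g xs))
      = measure_pmf.expectation (forecast_step S p0 L) excess"
    by (metis integral_map_pmf)
  also have "\<dots> \<le> \<epsilon>"
  proof -
    have "\<forall>p\<in>S. a \<le> L p \<and> L p \<le> b"
      using a b bucket_laplace_bounds[OF assms] unfolding L_def by (meson order_trans)
    then show ?thesis
      unfolding excess_def by (rule expectation_forecast_step_le[OF S(1,2) a(1) b(1) _ \<epsilon>])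
  qed
  moreover have "measure_pmf.expectation (round_pmf S p0 f n) (\<lambda>g. laplace_excess (preds (f(n := g)) ys) ys (Suc n))
      = laplace_excess (preds f ys) ys n + measure_pmf.expectation (round_pmf S p0 f n) (\<lambda>g. excess (g xs))"
    unfolding excess_upd using finite_set_round_pmf[OF S(1,3)]
    by (subst Bochner_Integration.integral_add) (auto intro: integrable_measure_pmf_finite)
  ultimately show ?thesis by simp
qed

lemma expectation_laplace_excess_forecaster_le:
  "n \<le> T \<Longrightarrow> measure_pmf.expectation (forecaster S p0 n) (\<lambda>f. laplace_excess (preds f ys) ys n) \<le> real n * \<epsilon>"
proof (induction n)
  case 0
  then show ?case by (simp add: laplace_excess_def)
next
  case (Suc n)
  let ?A = "forecaster S p0 n"
  have fin: "finite (set_pmf ?A)" by (rule finite_set_forecaster[OF S(1,3)])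
  have "measure_pmf.expectation (forecaster S p0 (Suc n)) (\<lambda>f. laplace_excess (preds f ys) ys (Suc n))
      = measure_pmf.expectation ?A (\<lambda>f. measure_pmf.expectation (round_pmf S p0 f n)
          (\<lambda>g. laplace_excess (preds (f(n := g)) ys) ys (Suc n)))"
    using fin finite_set_round_pmf[OF S(1,3)] by (simp add: expectation_bind_pmf_finite)
  also have "\<dots> \<le> measure_pmf.expectation ?A (\<lambda>f. laplace_excess (preds f ys) ys n + \<epsilon>)"
    using fin Suc.prems expectation_round_laplace_excess_le
    by (intro integral_mono_AE) (auto intro: integrable_measure_pmf_finite simp: AE_measure_pmf_iff)
  also have "\<dots> = measure_pmf.expectation ?A (\<lambda>f. laplace_excess (preds f ys) ys n) + \<epsilon>"
    using fin by (subst Bochner_Integration.integral_add) (auto intro: integrable_measure_pmf_finite)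
  also have "\<dots> \<le> real n * \<epsilon> + \<epsilon>" using Suc by simp
  finally show ?case by (simp add: algebra_simps)
qed

end

definition logistic :: "real \<Rightarrow> real" where
  "logistic z = exp z / (1 + exp z)"

lemma logistic_pos: "0 < logistic z" and logistic_less_one: "logistic z < 1"
  by (simp_all add: logistic_def add_pos_pos)

lemma logistic_strict_mono: "z < w \<Longrightarrow> logistic z < logistic w"
proof -
  assume "z < w"
  then have "exp z * (1 + exp w) < exp w * (1 + exp z)" by (simp add: algebra_simps)
  then show "logistic z < logistic w" by (simp add: logistic_def field_simps add_pos_pos)
qed

lemma logistic_less_iff: "logistic z < logistic w \<longleftrightarrow> z < w"
  using logistic_strict_mono[of z w] logistic_strict_mono[of w z] by (cases z w rule: linorder_cases) auto

lemma logistic_0: "logistic 0 = 1 / 2"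
  by (simp add: logistic_def)

lemma logistic_ln: "0 < t \<Longrightarrow> logistic (ln t) = t / (t + 1)"
  by (simp add: logistic_def add.commute)

lemma logistic_minus_ln: "0 < t \<Longrightarrow> logistic (- ln t) = 1 / (t + 1)"
  by (simp add: logistic_def exp_minus field_simps)

lemma KL_logistic_shift_le: "KL (logistic z) (logistic (z + x)) \<le> (exp x - 1)^2 / (4 * exp x)"
proof -
  define u where "u = exp z"
  define r where "r = exp x"
  have u: "u > 0" and r: "r > 0" unfolding u_def r_def by auto
  have q: "logistic z = u / (1 + u)" unfolding logistic_def u_def ..
  have p: "logistic (z + x) = u * r / (1 + u * r)" unfolding logistic_def u_def r_def by (simp add: exp_add)
  have "0 < u * r" using u r by simp
  then have "1 + u \<noteq> 0" "1 + u * r \<noteq> 0" using u by linarith+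
  then have "logistic z - logistic (z + x)
      = (u * (1 + u * r) - u * r * (1 + u)) / ((1 + u) * (1 + u * r))"
    unfolding q p by (rule diff_frac_eq)
  also have "u * (1 + u * r) - u * r * (1 + u) = u * (1 - r)" by (simp add: algebra_simps)
  finally have d: "logistic z - logistic (z + x) = u * (1 - r) / ((1 + u) * (1 + u * r))" .
  have "1 - u * r / (1 + u * r) = 1 / (1 + u * r)"
    using \<open>0 < u * r\<close> by (simp add: field_simps)
  then have pp: "logistic (z + x) * (1 - logistic (z + x)) = u * r / (1 + u * r)^2"
    unfolding p by (simp add: power2_eq_square)
  have "KL (logistic z) (logistic (z + x))
      \<le> (logistic z - logistic (z + x))^2 / (logistic (z + x) * (1 - logistic (z + x)))"
    by (intro KL_le_chi_square logistic_pos logistic_less_one)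
  also have "\<dots> = (u * (1 - r))^2 / ((1 + u)^2 * (1 + u * r)^2) / (u * r / (1 + u * r)^2)"
    unfolding d pp by (simp add: power_divide power_mult_distrib)
  also have "\<dots> = (u * (1 - r))^2 / ((1 + u)^2 * (u * r))"
    using \<open>1 + u \<noteq> 0\<close> \<open>1 + u * r \<noteq> 0\<close> \<open>0 < u * r\<close> by (simp add: divide_simps)
  also have "\<dots> = (u * (u * (1 - r)^2)) / (u * ((1 + u)^2 * r))"
    by (simp add: power_mult_distrib power2_eq_square mult_ac)
  also have "\<dots> = (u / (1 + u)^2) * ((1 - r)^2 / r)"
    using u by simp
  also have "\<dots> \<le> (1 / 4) * ((1 - r)^2 / r)"
  proof (rule mult_right_mono)
    have "4 * u \<le> (1 + u)^2" using sum_squares_ge_zero[of "1 - u" 0] by (simp add: power2_eq_square algebra_simps)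
    then show "u / (1 + u)^2 \<le> 1 / 4" using u by (simp add: field_simps add_pos_pos)
  qed (use r in simp)
  also have "\<dots> = (exp x - 1)^2 / (4 * exp x)" unfolding r_def by (simp add: power2_commute)
  finally show ?thesis .
qed

lemma exp_minus_one_sq_div_le:
  fixes x :: real
  assumes "0 \<le> x" "x \<le> 1"
  shows "(exp x - 1)^2 / (4 * exp x) \<le> x^2"
proof -
  have "exp x - 1 \<le> x * exp x"
    using exp_ge_add_one_self[of "- x"] by (simp add: exp_minus field_simps)
  then have "(exp x - 1)^2 \<le> (x * exp x)^2" using assms by (intro power_mono) auto
  then have "(exp x - 1)^2 / (4 * exp x) \<le> x^2 * (exp x / 4)"
    by (simp add: divide_right_mono power2_eq_square field_simps)
  also have "\<dots> \<le> x^2 * 1"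
  proof (rule mult_left_mono)
    have "exp x \<le> exp 1" using assms by simp
    then show "exp x / 4 \<le> 1" using exp_le by linarith
  qed simp
  finally show ?thesis by simp
qed

definition logistic_grid :: "nat \<Rightarrow> real \<Rightarrow> real set" where
  "logistic_grid M x = (\<lambda>j::int. logistic (x * of_int j)) ` {- int M..int M}"

lemma finite_logistic_grid: "finite (logistic_grid M x)"
  by (simp add: logistic_grid_def)

lemma card_logistic_grid_le: "card (logistic_grid M x) \<le> 2 * M + 1"
proof -
  have "card (logistic_grid M x) \<le> card {- int M..int M}"
    unfolding logistic_grid_def by (rule card_image_le) simp
  then show ?thesis by simp
qed

lemma logistic_grid_subset: "logistic_grid M x \<subseteq> {0<..<1}"
  by (auto simp: logistic_grid_def logistic_pos logistic_less_one)

lemma logistic_in_grid: "- int M \<le> j \<Longrightarrow> j \<le> int M \<Longrightarrow> logistic (x * of_int j) \<in> logistic_grid M x"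
  by (simp add: logistic_grid_def)

lemma neighbour_KL_le_logistic_grid:
  assumes "0 < x"
  shows "neighbour_KL_le (logistic_grid M x) ((exp x - 1)^2 / (4 * exp x))"
  unfolding neighbour_KL_le_def
proof (intro ballI impI)
  fix p p' assume "p \<in> logistic_grid M x" "p' \<in> logistic_grid M x"
    and adjacent: "p < p' \<and> (\<forall>q\<in>logistic_grid M x. \<not> (p < q \<and> q < p'))"
  then obtain i j where i: "- int M \<le> i" "p = logistic (x * of_int i)"
    and j: "j \<le> int M" "p' = logistic (x * of_int j)"
    unfolding logistic_grid_def by auto
  have "i < j" using adjacent i j assms by (simp add: logistic_less_iff)
  have "j = i + 1"
  proof (rule ccontr)
    assume "j \<noteq> i + 1"
    with \<open>i < j\<close> i j have "logistic (x * of_int (i + 1)) \<in> logistic_grid M x"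
      by (intro logistic_in_grid) auto
    moreover have "p < logistic (x * of_int (i + 1))" "logistic (x * of_int (i + 1)) < p'"
      using \<open>i < j\<close> \<open>j \<noteq> i + 1\<close> i j assms by (simp_all add: logistic_less_iff)
    ultimately show False using adjacent by blast
  qed
  then show "KL p p' \<le> (exp x - 1)^2 / (4 * exp x)"
    using i j KL_logistic_shift_le[of "x * of_int i" x] by (simp add: algebra_simps)
qed

lemma powr_third_identities:
  fixes t :: real
  assumes "2 \<le> t"
  defines "u \<equiv> t powr (1/3) * ln t powr (2/3)"
  shows "ln t \<le> u" "t * (ln t)^2 = u^3" "t powr (1/3) * ln t powr (5/3) = u * ln t"
proof -
  define a where "a = t powr (1/3)"
  define c where "c = ln t powr (1/3)"
  have "0 < ln t" using assms by simp
  have a3: "a^3 = t" unfolding a_def using assms by (subst powr_power) auto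
  have c3: "c^3 = ln t" unfolding c_def using \<open>0 < ln t\<close> by (subst powr_power) auto
  have c2: "ln t powr (2/3) = c^2" unfolding c_def using \<open>0 < ln t\<close> by (subst powr_power) auto
  have c5: "ln t powr (5/3) = c^5" unfolding c_def using \<open>0 < ln t\<close> by (subst powr_power) auto
  have "0 < c" unfolding c_def using \<open>0 < ln t\<close> by simp
  have "c \<le> a"
    unfolding a_def c_def using \<open>0 < ln t\<close> ln_le_minus_one[of t] assms by (intro powr_mono2) auto
  have u: "u = a * c^2" unfolding u_def a_def c2 ..
  have "c * c^2 \<le> a * c^2" using \<open>c \<le> a\<close> by (intro mult_right_mono) auto
  then show "ln t \<le> u" unfolding u c3[symmetric] by (simp add: power3_eq_cube power2_eq_square)
  have "(a * c^2)^3 = a^3 * (c^3)^2" by algebra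
  then show "t * (ln t)^2 = u^3" unfolding u a3 c3 by (rule sym)
  have "a * c^5 = (a * c^2) * c^3" by algebra
  then show "t powr (1/3) * ln t powr (5/3) = u * ln t" unfolding u c5 a_def[symmetric] c3 .
qed

lemma grid_tradeoff:
  fixes T :: nat
  assumes "2 \<le> T"
  defines "M \<equiv> nat \<lceil>real T powr (1/3) * ln (real T) powr (2/3)\<rceil>"
  shows "ln (real T) \<le> real M"
    and "real T * (ln (real T) / real M)^2 + (2 * real M + 1) * ln (real T + 1)
      \<le> 18 * real T powr (1/3) * ln (real T) powr (5/3)"
proof -
  define t where "t = real T"
  define l where "l = ln t"
  define u where "u = t powr (1/3) * l powr (2/3)"
  have t: "2 \<le> t" using assms unfolding t_def by simp
  note u_facts = powr_third_identities[OF t, folded l_def, folded u_def]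
  have "ln 2 \<le> l" unfolding l_def using t by simp
  then have l: "1/2 \<le> l" using ln2_ge_two_thirds by linarith
  have "0 \<le> u" using u_facts(1) l by linarith
  then have "real M = of_int \<lceil>u\<rceil>" unfolding M_def u_def t_def[symmetric] l_def[symmetric] by simp
  then have M: "u \<le> real M" "real M \<le> u + 1"
    using le_of_int_ceiling[of u] of_int_ceiling_le_add_one[of u] by simp_all
  then show "ln (real T) \<le> real M" using u_facts(1) unfolding l_def t_def by linarith
  have "t * (l / real M)^2 \<le> t * (l / u)^2"
    using M u_facts(1) l t by (intro mult_left_mono power_mono divide_left_mono) auto
  also have "\<dots> = u" using u_facts(1,2) l by (simp add: field_simps power2_eq_square power3_eq_cube)
  also have "\<dots> \<le> 2 * (u * l)"
    using mult_left_mono[of 1 "2 * l" u] l \<open>0 \<le> u\<close> by simp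
  finally have discretization: "t * (l / real M)^2 \<le> 2 * (u * l)" .
  have "ln (t + 1) \<le> ln (t^2)" using t by (subst ln_le_cancel_iff) (auto simp: power2_eq_square intro: order_trans[of _ "2 * t"])
  then have "ln (t + 1) \<le> 2 * l" unfolding l_def using t by (simp add: ln_realpow)
  then have "(2 * real M + 1) * ln (t + 1) \<le> (2 * (u + 1) + 1) * (2 * l)"
    using M u_facts(1) l t by (intro mult_mono) auto
  also have "\<dots> = 4 * (u * l) + 6 * l" by (simp add: algebra_simps)
  also have "\<dots> \<le> 16 * (u * l)"
    using mult_left_mono[of 1 "2 * u" l] l u_facts(1) by simp
  finally show "real T * (ln (real T) / real M)^2 + (2 * real M + 1) * ln (real T + 1)
      \<le> 18 * real T powr (1/3) * ln (real T) powr (5/3)"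
    using discretization u_facts(3) unfolding t_def[symmetric] l_def[symmetric] by (simp add: mult.assoc)
qed

lemma logistic_grid_choice:
  fixes T M :: nat
  assumes T: "2 \<le> T" and M_def: "M = nat \<lceil>real T powr (1/3) * ln (real T) powr (2/3)\<rceil>"
    and x_def: "x = ln (real T) / real M"
  shows "1 / 2 \<in> logistic_grid M x" "1 / (real T + 1) \<in> logistic_grid M x"
    "real T / (real T + 1) \<in> logistic_grid M x" "neighbour_KL_le (logistic_grid M x) (x^2)"
    and "real T * x^2 + real (card (logistic_grid M x)) * ln (real T + 1)
      \<le> 18 * real T powr (1/3) * ln (real T) powr (5/3)"
proof -
  note tradeoff = grid_tradeoff[OF T, folded M_def, folded x_def]
  have "0 < ln (real T)" using T by simp
  moreover have "0 < real M" using tradeoff(1) calculation by linarith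
  ultimately have x: "0 < x" "x \<le> 1" "x * real M = ln (real T)"
    using tradeoff(1) unfolding x_def by simp_all
  then have "x * of_int (- int M) = - ln (real T)" "x * of_int (int M) = ln (real T)"
    by simp_all
  then show "1 / 2 \<in> logistic_grid M x" "1 / (real T + 1) \<in> logistic_grid M x"
    "real T / (real T + 1) \<in> logistic_grid M x"
    using logistic_in_grid[of M 0 x] logistic_in_grid[of M "- int M" x] logistic_in_grid[of M "int M" x]
      logistic_minus_ln[of "real T"] logistic_ln[of "real T"] T
    by (simp_all add: logistic_0)
  show "neighbour_KL_le (logistic_grid M x) (x^2)"
    using x(1,2) by (intro neighbour_KL_le_mono[OF neighbour_KL_le_logistic_grid exp_minus_one_sq_div_le]) simp_all
  have "real (card (logistic_grid M x)) * ln (real T + 1) \<le> (2 * real M + 1) * ln (real T + 1)"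
    using card_logistic_grid_le[of M x] by (intro mult_right_mono) auto
  then show "real T * x^2 + real (card (logistic_grid M x)) * ln (real T + 1)
      \<le> 18 * real T powr (1/3) * ln (real T) powr (5/3)"
    using tradeoff(2) by (simp add: x_def)
qed

theorem theorem1:
  "\<exists>C::real. \<forall>T::nat. T \<ge> 2 \<longrightarrow>
     (\<exists>(A :: strategy pmf) (S :: real set).
        finite S \<and> S \<subseteq> {0<..<1} \<and>
        (\<forall>f\<in>set_pmf A. \<forall>t xs. f t xs \<in> S) \<and>
        (\<forall>ys :: nat \<Rightarrow> bool.
           (\<integral>\<^sup>+ f. e2ennreal (SReg T (preds f ys) ys) \<partial>measure_pmf A)
             \<le> ennreal (C * real T powr (1/3) * ln (real T) powr (5/3)) \<and>
           (\<integral>\<^sup>+ f. ennreal (KLCal T (preds f ys) ys) \<partial>measure_pmf A)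
             \<le> ennreal (C * real T powr (1/3) * ln (real T) powr (5/3))))"
proof (intro exI[of _ 18] allI impI, goal_cases)
  case (1 T)
  define M where "M = nat \<lceil>real T powr (1/3) * ln (real T) powr (2/3)\<rceil>"
  define x where "x = ln (real T) / real M"
  define S where "S = logistic_grid M x"
  note grid = logistic_grid_choice[OF 1 M_def x_def, folded S_def]
  interpret forecasting_grid S "1 / 2" T "x^2" "1 / (real T + 1)" "real T / (real T + 1)"
    using grid by unfold_locales (auto simp: S_def finite_logistic_grid logistic_grid_subset)
  show ?case
  proof (intro exI[of _ "forecaster S (1 / 2) T"] exI[of _ S] conjI allI)
    fix ys
    have "measure_pmf.expectation (forecaster S (1 / 2) T) (\<lambda>f. laplace_excess (preds f ys) ys T)
        + real (card S) * ln (real T + 1) \<le> 18 * real T powr (1/3) * ln (real T) powr (5/3)"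
      using expectation_laplace_excess_forecaster_le[of T ys] grid(5) by simp
    note bounds = nn_integral_SReg_KLCal_le[OF S(1,2) finite_set_forecaster[OF S(1,3)] _ this]
    show "(\<integral>\<^sup>+f. e2ennreal (SReg T (preds f ys) ys) \<partial>measure_pmf (forecaster S (1 / 2) T))
        \<le> ennreal (18 * real T powr (1/3) * ln (real T) powr (5/3))"
      using forecaster_values_in[OF S(1,3)] by (intro bounds(1)) blast
    show "(\<integral>\<^sup>+f. ennreal (KLCal T (preds f ys) ys) \<partial>measure_pmf (forecaster S (1 / 2) T))
        \<le> ennreal (18 * real T powr (1/3) * ln (real T) powr (5/3))"
      using forecaster_values_in[OF S(1,3)] by (intro bounds(2)) blast
  qed (use S forecaster_values_in[OF S(1,3)] in auto)
qed

end
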